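(* Let $\mathbb{L}$ be the projective Fraïssé limit of $\mathcal{F}^{(n)}$, let $i\in[n]$ and let $b$ be a clopen subset of $L$ with $p_i^{\mathbb{L}}\in b$. Then there exists a clopen set $c$ with $p_i^{\mathbb{L}}\in c\subseteq b$ such that $c$ is a union of connected components of $\mathbb{L}$.
   Context: Fix $m\in\mathbb{N}$, $n\ge0$; $\sigma^{(n)}=\{s_1,\dots,s_m,p_1,\dots,p_n\}$ with $s_i$ binary relation symbols and $p_j$ constants. A topological structure is a zero-dimensional compact second countable space with closed sets for the $s_i$ and points for the $p_j$; finite ones are discrete. An epimorphism is a continuous surjection $\phi$ with $\phi(s_i^{\mathbb{A}})=s_i^{\mathbb{B}}$ and $\phi(p_j^{\mathbb{A}})=p_j^{\mathbb{B}}$. A binary relation $s$ on $A$ is surjective if each $a$ has $b,c$ with $(a,b),(c,a)\in s$; $a$ is outgoing for $s$ if $|\{b:(b,a)\in s\}|=1$ and $|\{b:(a,b)\in s\}|\ge2$. $\mathcal{F}$: finite $\{s_1,\dots,s_m\}$-structures with all $s_i$ surjective such that (i) every point is outgoing for exactly one of $s_1,s_1^{-1},\dots,s_m,s_m^{-1}$, (ii) if $(a,b)\in s_i$ then $a$ is $s_i$-outgoing or $b$ is $s_i^{-1}$-outgoing. $\mathbb{A}^{(n)}$: universe $A\sqcup[n]$, $s_i^{\mathbb{A}^{(n)}}=s_i^{\mathbb{A}}\cup\{(j,j):j\in[n]\}$, $p_j^{\mathbb{A}^{(n)}}=j$; $\mathcal{F}^{(n)}=\{\mathbb{A}^{(n)}:\mathbb{A}\in\mathcal{F}\}$.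 The projective Fraïssé limit $\mathbb{L}$ of $\mathcal{F}^{(n)}$ (exists, unique up to isomorphism) satisfies: (L1) every member of $\mathcal{F}^{(n)}$ is an epimorphic image of $\mathbb{L}$; (L2) every continuous map from $L$ to a finite discrete set factors through an epimorphism of $\mathbb{L}$ onto a member of $\mathcal{F}^{(n)}$; (L3) any two epimorphisms $\phi_1,\phi_2\colon\mathbb{L}\to\mathbb{A}\in\mathcal{F}^{(n)}$ satisfy $\phi_1=\phi_2\alpha$ for some automorphism $\alpha$ of $\mathbb{L}$. Connected components of a $\sigma$- or $\sigma^{(n)}$-structure are the connected components of the simple graph on its universe with an edge $\{a,b\}$ whenever $a\ne b$ and $(a,b)\in s_i$ for some $i$. *)

theory Defs
  imports "HOL-Analysis.Analysis"
begin

text \<open>A sigma^(n)-structure: a topology, binary relations s_1..s_m (indices 0..m-1,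
  so s_{i+1} is rel S i) and constants p_1..p_n (pt S j for j in {1..n}).\<close>
record 'a tstruct =
  top :: "'a topology"
  rel :: "nat \<Rightarrow> ('a \<times> 'a) set"
  pt  :: "nat \<Rightarrow> 'a"

definition clopen_in :: "'a topology \<Rightarrow> 'a set \<Rightarrow> bool" where
  "clopen_in T U \<longleftrightarrow> openin T U \<and> closedin T U"

definition zero_dimensional_space :: "'a topology \<Rightarrow> bool" where
  "zero_dimensional_space T \<longleftrightarrow>
     (\<forall>U x. openin T U \<and> x \<in> U \<longrightarrow> (\<exists>V. clopen_in T V \<and> x \<in> V \<and> V \<subseteq> U))"

definition topological_structure :: "nat \<Rightarrow> nat \<Rightarrow> 'a tstruct \<Rightarrow> bool" where
  "topological_structure m n S \<longleftrightarrow>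
     zero_dimensional_space (top S) \<and> Hausdorff_space (top S) \<and>
     compact_space (top S) \<and> second_countable (top S) \<and>
     (\<forall>i<m. rel S i \<subseteq> topspace (top S) \<times> topspace (top S) \<and>
            closedin (prod_topology (top S) (top S)) (rel S i)) \<and>
     (\<forall>j\<in>{1..n}. pt S j \<in> topspace (top S))"

definition epimorphism :: "nat \<Rightarrow> nat \<Rightarrow> 'a tstruct \<Rightarrow> 'b tstruct \<Rightarrow> ('a \<Rightarrow> 'b) \<Rightarrow> bool" where
  "epimorphism m n A B \<phi> \<longleftrightarrow>
     continuous_map (top A) (top B) \<phi> \<and> \<phi> ` topspace (top A) = topspace (top B) \<and>
     (\<forall>i<m. (\<lambda>(x, y). (\<phi> x, \<phi> y)) ` rel A i = rel B i) \<and>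
     (\<forall>j\<in>{1..n}. \<phi> (pt A j) = pt B j)"

definition automorphism :: "nat \<Rightarrow> nat \<Rightarrow> 'a tstruct \<Rightarrow> ('a \<Rightarrow> 'a) \<Rightarrow> bool" where
  "automorphism m n L \<alpha> \<longleftrightarrow>
     (\<exists>\<beta>. epimorphism m n L L \<alpha> \<and> epimorphism m n L L \<beta> \<and>
          (\<forall>x\<in>topspace (top L). \<beta> (\<alpha> x) = x \<and> \<alpha> (\<beta> x) = x))"

definition surjective_rel :: "'b set \<Rightarrow> ('b \<times> 'b) set \<Rightarrow> bool" where
  "surjective_rel A s \<longleftrightarrow> (\<forall>a\<in>A. \<exists>b c. (a, b) \<in> s \<and> (c, a) \<in> s)"

definition outgoing :: "('b \<times> 'b) set \<Rightarrow> 'b \<Rightarrow> bool" where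
  "outgoing s a \<longleftrightarrow> card {b. (b, a) \<in> s} = 1 \<and> 2 \<le> card {b. (a, b) \<in> s}"

text \<open>The 2m relations s_1, s_1^-1, ..., s_m, s_m^-1 are indexed by pairs (i, e),
  e = True for s_i and e = False for s_i^-1.\<close>
definition in_F :: "nat \<Rightarrow> 'b set \<Rightarrow> (nat \<Rightarrow> ('b \<times> 'b) set) \<Rightarrow> bool" where
  "in_F m A R \<longleftrightarrow> finite A \<and>
     (\<forall>i<m. R i \<subseteq> A \<times> A \<and> surjective_rel A (R i)) \<and>
     (\<forall>a\<in>A. card {(i, e). i < m \<and> outgoing (if e then R i else (R i)\<inverse>) a} = 1) \<and>
     (\<forall>i<m. \<forall>(a, b)\<in>R i. outgoing (R i) a \<or> outgoing ((R i)\<inverse>) b)"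

definition ext_n :: "nat \<Rightarrow> 'b set \<Rightarrow> (nat \<Rightarrow> ('b \<times> 'b) set) \<Rightarrow> ('b + nat) tstruct" where
  "ext_n n A R =
     \<lparr> top = discrete_topology (Inl ` A \<union> Inr ` {1..n}),
       rel = (\<lambda>i. (\<lambda>(x, y). (Inl x, Inl y)) ` R i \<union> {(Inr j, Inr j) | j. j \<in> {1..n}}),
       pt = (\<lambda>j. Inr j) \<rparr>"

text \<open>Members of F are taken
  with universe in nat (every finite structure is isomorphic to one of these); finite discrete
  target sets in (L2) are likewise taken as finite subsets of nat.\<close>
definition proj_fraisse_limit :: "nat \<Rightarrow> nat \<Rightarrow> 'a tstruct \<Rightarrow> bool" where
  "proj_fraisse_limit m n L \<longleftrightarrow>
     topological_structure m n L \<and>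
     (\<forall>(A::nat set) R. in_F m A R \<longrightarrow> (\<exists>\<phi>. epimorphism m n L (ext_n n A R) \<phi>)) \<and>
     (\<forall>(Y::nat set) f. finite Y \<and> continuous_map (top L) (discrete_topology Y) f \<longrightarrow>
        (\<exists>(A::nat set) R \<phi> g. in_F m A R \<and> epimorphism m n L (ext_n n A R) \<phi> \<and>
            (\<forall>x\<in>topspace (top L). f x = g (\<phi> x)))) \<and>
     (\<forall>(A::nat set) R \<phi>1 \<phi>2. in_F m A R \<and> epimorphism m n L (ext_n n A R) \<phi>1 \<and>
          epimorphism m n L (ext_n n A R) \<phi>2 \<longrightarrow>
        (\<exists>\<alpha>. automorphism m n L \<alpha> \<and> (\<forall>x\<in>topspace (top L). \<phi>1 x = \<phi>2 (\<alpha> x))))"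

definition graph_edges :: "nat \<Rightarrow> 'a tstruct \<Rightarrow> ('a \<times> 'a) set" where
  "graph_edges m S = {(a, b). a \<in> topspace (top S) \<and> b \<in> topspace (top S) \<and> a \<noteq> b \<and>
                        (\<exists>i<m. (a, b) \<in> rel S i \<or> (b, a) \<in> rel S i)}"

definition connected_component_of :: "nat \<Rightarrow> 'a tstruct \<Rightarrow> 'a \<Rightarrow> 'a set" where
  "connected_component_of m S a = {b. (a, b) \<in> (graph_edges m S)\<^sup>*}"

definition connected_components :: "nat \<Rightarrow> 'a tstruct \<Rightarrow> 'a set set" where
  "connected_components m S = connected_component_of m S ` topspace (top S)"

definition union_of_components :: "nat \<Rightarrow> 'a tstruct \<Rightarrow> 'a set \<Rightarrow> bool" where
  "union_of_components m S c \<longleftrightarrow> (\<exists>K \<subseteq> connected_components m S. c = \<Union>K)"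

end

theory Submission
  imports Defs
begin

text \<open>By (L2) the indicator function of b factors through an epimorphism \<phi> from L onto some
  A^(n). The fibre c of \<phi> over the constant i is then clopen, contains p_i and lies in b. In
  A^(n) the constant i is related only to itself, and \<phi> maps every relation of L into the
  corresponding one of A^(n); so no edge of L leaves c, and c is a union of connected components.\<close>

lemma continuous_map_if_clopen:
  assumes "clopen_in X b"
  shows "continuous_map X (discrete_topology {u, v}) (\<lambda>x. if x \<in> b then u else v)"
proof (rule continuous_map_cases)
  have "b \<subseteq> topspace X"
    using assms openin_subset by (auto simp: clopen_in_def)
  then show "x \<in> X frontier_of {x. x \<in> b} \<Longrightarrow> u = v" for x
    using assms frontier_of_eq_empty by (auto simp: clopen_in_def)
qed auto

lemma clopen_in_fibre_discrete:
  assumes "continuous_map X (discrete_topology U) f" and "y \<in> U"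
  shows "clopen_in X {x \<in> topspace X. f x = y}"
proof -
  have "{x \<in> topspace X. f x = y} = {x \<in> topspace X. f x \<in> {y}}"
    by auto
  moreover have "openin (discrete_topology U) {y}" "closedin (discrete_topology U) {y}"
    using assms(2) by auto
  ultimately show ?thesis
    unfolding clopen_in_def
    using openin_continuous_map_preimage[OF assms(1)] closedin_continuous_map_preimage[OF assms(1)]
    by metis
qed

lemma epimorphism_rel:
  assumes "epimorphism m n A B \<phi>" and "k < m" and "(x, y) \<in> rel A k"
  shows "(\<phi> x, \<phi> y) \<in> rel B k"
  using assms by (force simp: epimorphism_def)

lemma rel_ext_n_Inr:
  assumes "(u, v) \<in> rel (ext_n n A R) k"
  shows "u = Inr j \<longleftrightarrow> v = Inr j"
  using assms by (auto simp: ext_n_def)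

lemma epimorphism_ext_n_edge_Inr:
  assumes "epimorphism m n L (ext_n n A R) \<phi>" and "(x, y) \<in> graph_edges m L"
  shows "\<phi> x = Inr j \<longleftrightarrow> \<phi> y = Inr j"
proof -
  obtain k where "k < m" and "(x, y) \<in> rel L k \<or> (y, x) \<in> rel L k"
    using assms(2) by (auto simp: graph_edges_def)
  then show ?thesis
    using epimorphism_rel[OF assms(1)] rel_ext_n_Inr by metis
qed

lemma union_of_components_if_closed_under_edges:
  assumes "c \<subseteq> topspace (top S)"
    and closed: "\<And>x y. x \<in> c \<Longrightarrow> (x, y) \<in> graph_edges m S \<Longrightarrow> y \<in> c"
  shows "union_of_components m S c"
  unfolding union_of_components_def
proof (intro exI conjI)
  show "connected_component_of m S ` c \<subseteq> connected_components m S"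
    using assms(1) by (auto simp: connected_components_def)
  have "connected_component_of m S x \<subseteq> c" if "x \<in> c" for x
  proof
    fix y
    assume "y \<in> connected_component_of m S x"
    then have "(x, y) \<in> (graph_edges m S)\<^sup>*"
      by (simp add: connected_component_of_def)
    then show "y \<in> c"
      by (induction rule: rtrancl_induct) (use that closed in auto)
  qed
  then show "c = \<Union> (connected_component_of m S ` c)"
    by (auto simp: connected_component_of_def)
qed

lemma proj_fraisse_limit_factorization:
  assumes "proj_fraisse_limit m n L" and "finite (Y :: nat set)"
    and "continuous_map (top L) (discrete_topology Y) f"
  obtains A :: "nat set" and R \<phi> g where "in_F m A R" and "epimorphism m n L (ext_n n A R) \<phi>"
    and "\<And>x. x \<in> topspace (top L) \<Longrightarrow> f x = g (\<phi> x)"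
  using assms unfolding proj_fraisse_limit_def by (elim conjE allE[of _ Y] allE[of _ f]) blast

lemma proj_fraisse_limit_epimorphism_refining_clopen:
  assumes "proj_fraisse_limit m n L" and "clopen_in (top L) b"
  obtains A :: "nat set" and R \<phi> where "in_F m A R" and "epimorphism m n L (ext_n n A R) \<phi>"
    and "\<And>x y. x \<in> topspace (top L) \<Longrightarrow> y \<in> topspace (top L) \<Longrightarrow> \<phi> x = \<phi> y \<Longrightarrow>
           x \<in> b \<Longrightarrow> y \<in> b"
proof -
  define f where "f x = (if x \<in> b then 1 else 0 :: nat)" for x
  have "continuous_map (top L) (discrete_topology {1, 0}) f"
    unfolding f_def by (rule continuous_map_if_clopen[OF assms(2)])
  moreover have "finite {1, 0 :: nat}"
    by simp
  ultimately obtain A :: "nat set" and R \<phi> g where "in_F m A R" "epimorphism m n L (ext_n n A R) \<phi>"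
      and factors: "\<And>x. x \<in> topspace (top L) \<Longrightarrow> f x = g (\<phi> x)"
    using proj_fraisse_limit_factorization[OF assms(1)] by blast
  show thesis
  proof (rule that)
    fix x y
    assume "x \<in> topspace (top L)" "y \<in> topspace (top L)" "\<phi> x = \<phi> y" "x \<in> b"
    then have "f y = f x"
      using factors by simp
    with \<open>x \<in> b\<close> show "y \<in> b"
      by (simp add: f_def split: if_splits)
  qed fact+
qed

theorem lemma3p6:
  fixes m n :: nat and L :: "'a tstruct" and i :: nat and b :: "'a set"
  assumes "proj_fraisse_limit m n L"
    and "i \<in> {1..n}"
    and "clopen_in (top L) b"
    and "pt L i \<in> b"
  shows "\<exists>c. clopen_in (top L) c \<and> pt L i \<in> c \<and> c \<subseteq> b \<and> union_of_components m L c"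
proof -
  obtain A :: "nat set" and R \<phi> where epi: "epimorphism m n L (ext_n n A R) \<phi>"
    and refines: "\<And>x y. x \<in> topspace (top L) \<Longrightarrow> y \<in> topspace (top L) \<Longrightarrow> \<phi> x = \<phi> y \<Longrightarrow>
                    x \<in> b \<Longrightarrow> y \<in> b"
    using proj_fraisse_limit_epimorphism_refining_clopen[OF assms(1,3)] by metis
  define c where "c = {x \<in> topspace (top L). \<phi> x = Inr i}"
  have pt: "pt L i \<in> topspace (top L)" "\<phi> (pt L i) = Inr i"
    using assms(1,2) epi
    by (auto simp: proj_fraisse_limit_def topological_structure_def epimorphism_def ext_n_def)
  have "clopen_in (top L) c"
    unfolding c_def using epi assms(2)
    by (intro clopen_in_fibre_discrete) (auto simp: epimorphism_def ext_n_def)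
  moreover have "c \<subseteq> b"
    using refines[OF pt(1) _ _ assms(4)] pt(2) by (auto simp: c_def)
  moreover have "union_of_components m L c"
    using epimorphism_ext_n_edge_Inr[OF epi]
    by (intro union_of_components_if_closed_under_edges) (auto simp: c_def graph_edges_def)
  ultimately show ?thesis
    using pt by (auto simp: c_def)
qed

end
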